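(* Let $G=(V,E)$ be a finite directed acyclic graph, $G'=(V,E')$ its minimum equivalent graph, and $f:V\to S$ a stream assignment satisfying maximum logical concurrency on $G'$. Then $\mathrm{min}_{sync}(G',f)=|E'|-|Q(f)|$.
   Context: A path from $u$ to $v$ in a directed graph is a nonempty sequence of edges $(u,w_1),\dots,(w_k,v)$ of that graph. The minimum equivalent graph (MEG) of a finite DAG $G=(V,E)$ is the subgraph $G'=(V,E')$, $E'\subseteq E$, with the same vertex set and the smallest number of edges among subgraphs having the same reachability relation as $G$. A stream assignment is a function $f:V\to S$ into a set of streams $S$; it satisfies maximum logical concurrency on $G'$ if for all distinct $u,v\in V$ with no path between them in either direction in $G'$, $f(u)\neq f(v)$. A synchronization plan $\Lambda\subseteq E'$ is safe for $f$ on $G'$ if for every edge $(u,v)\in E'$, either $f(u)=f(v)$ or there is a path $P\subseteq E'$ from $u$ to $v$ with $P\cap\Lambda\neq\emptyset$; $\mathrm{min}_{sync}(G',f)=\min\{|\Lambda| : \Lambda\subseteq E' \text{ safe for } f \text{ on } G'\}$. Define $Q(f)=\{v\in V : \exists p\in V \text{ with } (p,v)\in E' \text{ and } f(p)=f(v)\}$. *)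

theory Defs
  imports Main
begin

definition epath :: "('a \<times> 'a) set \<Rightarrow> 'a \<Rightarrow> 'a \<Rightarrow> ('a \<times> 'a) list \<Rightarrow> bool" where
  "epath E u v es \<longleftrightarrow> es \<noteq> [] \<and> set es \<subseteq> E \<and> fst (hd es) = u \<and> snd (last es) = v
     \<and> (\<forall>i. Suc i < length es \<longrightarrow> snd (es ! i) = fst (es ! Suc i))"

definition finite_dag :: "'a set \<Rightarrow> ('a \<times> 'a) set \<Rightarrow> bool" where
  "finite_dag V E \<longleftrightarrow> finite V \<and> E \<subseteq> V \<times> V \<and> acyclic E"

definition is_MEG :: "('a \<times> 'a) set \<Rightarrow> ('a \<times> 'a) set \<Rightarrow> bool" where
  "is_MEG E E' \<longleftrightarrow> E' \<subseteq> E \<and> E'\<^sup>+ = E\<^sup>+ \<and>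
     (\<forall>E''. E'' \<subseteq> E \<and> E''\<^sup>+ = E\<^sup>+ \<longrightarrow> card E' \<le> card E'')"

definition max_logical_concurrency :: "'a set \<Rightarrow> ('a \<times> 'a) set \<Rightarrow> ('a \<Rightarrow> 's) \<Rightarrow> bool" where
  "max_logical_concurrency V E' f \<longleftrightarrow>
     (\<forall>u\<in>V. \<forall>v\<in>V. u \<noteq> v \<and> \<not>(\<exists>P. epath E' u v P) \<and> \<not>(\<exists>P. epath E' v u P) \<longrightarrow> f u \<noteq> f v)"

definition safe_sync :: "('a \<times> 'a) set \<Rightarrow> ('a \<Rightarrow> 's) \<Rightarrow> ('a \<times> 'a) set \<Rightarrow> bool" where
  "safe_sync E' f \<Lambda> \<longleftrightarrow> \<Lambda> \<subseteq> E' \<and>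
     (\<forall>(u,v)\<in>E'. f u = f v \<or> (\<exists>P. epath E' u v P \<and> set P \<inter> \<Lambda> \<noteq> {}))"

definition min_sync :: "('a \<times> 'a) set \<Rightarrow> ('a \<Rightarrow> 's) \<Rightarrow> nat" where
  "min_sync E' f = Min (card ` {\<Lambda>. safe_sync E' f \<Lambda>})"

definition Qset :: "'a set \<Rightarrow> ('a \<times> 'a) set \<Rightarrow> ('a \<Rightarrow> 's) \<Rightarrow> 'a set" where
  "Qset V E' f = {v\<in>V. \<exists>p\<in>V. (p,v) \<in> E' \<and> f p = f v}"

end

theory Submission
  imports Defs
begin

text \<open>In a minimum equivalent graph no edge (u,v) can be bypassed: every path from u to v
  is the edge itself, since a detour would make the edge redundant (or, if the detour used the
  edge, close a cycle). Hence a safe plan must contain every cross-stream edge, and the set of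
  cross-stream edges is itself safe, so the minimum is their number. The remaining same-stream
  edges are counted by Q(f): two same-stream in-edges (p,v), (q,v) would force p and q to be
  ordered by maximum logical concurrency, and a path from p to q again bypasses (p,v).\<close>

lemma epath_Cons:
  "epath E u v (e # es) \<longleftrightarrow>
     e \<in> E \<and> fst e = u \<and> (if es = [] then snd e = v else epath E (snd e) v es)"
proof (cases es)
  case Nil
  then show ?thesis by (auto simp: epath_def)
next
  case (Cons e' es')
  have "(\<forall>i. Suc i < length (e # es) \<longrightarrow> snd ((e # es) ! i) = fst ((e # es) ! Suc i))
    \<longleftrightarrow> snd e = fst (hd es) \<and> (\<forall>i. Suc i < length es \<longrightarrow> snd (es ! i) = fst (es ! Suc i))"
    using Cons by (auto simp: nth_Cons split: nat.splits)
  then show ?thesis using Cons by (auto simp: epath_def)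
qed

lemma epath_trancl:
  "epath E u v es \<Longrightarrow> (u, v) \<in> (set es)\<^sup>+"
proof (induction es arbitrary: u)
  case Nil
  then show ?case by (simp add: epath_def)
next
  case (Cons e es)
  then show ?case
    by (cases e) (auto simp: epath_Cons split: if_splits
        intro: trancl_into_trancl2 trancl_mono[of _ "set es"])
qed

lemma epath_edge_rtrancl:
  assumes "epath E u v es" and "(a, b) \<in> set es"
  shows "(u, a) \<in> (set es)\<^sup>* \<and> (b, v) \<in> (set es)\<^sup>*"
  using assms
proof (induction es arbitrary: u)
  case Nil
  then show ?case by simp
next
  case (Cons e es)
  have mono: "(set es)\<^sup>* \<subseteq> (set (e # es))\<^sup>*" by (simp add: rtrancl_mono subset_insertI)
  show ?case
  proof (cases "e = (a, b)")
    case True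
    then have "(b, v) \<in> (set es)\<^sup>*" if "es \<noteq> []"
      using Cons.prems(1) epath_trancl[of E b v es] that by (auto simp: epath_Cons)
    with True Cons.prems(1) mono show ?thesis by (auto simp: epath_Cons split: if_splits)
  next
    case False
    then have "es \<noteq> []" "(a, b) \<in> set es" using Cons.prems(2) by auto
    then have "epath E (snd e) v es" and "e \<in> set (e # es)" and "fst e = u"
      using Cons.prems(1) by (auto simp: epath_Cons)
    with Cons.IH[of "snd e"] \<open>(a, b) \<in> set es\<close> mono show ?thesis
      by (metis converse_rtrancl_into_rtrancl prod.collapse subsetD)
  qed
qed

lemma rtrancl_Diff_edge:
  assumes "(x, y) \<in> R\<^sup>*"
  shows "(x, y) \<in> (R - {(a, b)})\<^sup>* \<or> (x, a) \<in> R\<^sup>* \<and> (b, y) \<in> R\<^sup>*"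
  using assms
proof (induction rule: rtrancl_induct)
  case base
  then show ?case by simp
next
  case (step y z)
  then show ?case
    by (cases "(y, z) = (a, b)") (auto intro: rtrancl_into_rtrancl)
qed

lemma acyclic_detour_avoids_edge:
  assumes "acyclic R" and "(u, a) \<in> R\<^sup>*" and "(a, b) \<in> R" and "(b, v) \<in> R\<^sup>*"
    and "(a, b) \<noteq> (u, v)"
  shows "(u, v) \<in> (R - {(u, v)})\<^sup>+"
proof -
  have through_ab: "(x, y) \<in> S\<^sup>+" if "(x, a) \<in> S\<^sup>*" "(a, b) \<in> S" "(b, y) \<in> S\<^sup>*" for x y S
    using that by (meson rtrancl_into_trancl1 trancl_rtrancl_trancl)
  have "(u, a) \<in> (R - {(u, v)})\<^sup>*"
  proof -
    have "(v, a) \<notin> R\<^sup>*"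
      using through_ab[of v R v] assms(1,3,4) by (auto simp: acyclic_def)
    then show ?thesis using rtrancl_Diff_edge[OF assms(2), of u v] by blast
  qed
  moreover have "(b, v) \<in> (R - {(u, v)})\<^sup>*"
  proof -
    have "(b, u) \<notin> R\<^sup>*"
      using through_ab[of u R u] assms(1-3) by (auto simp: acyclic_def)
    then show ?thesis using rtrancl_Diff_edge[OF assms(4), of u v] by blast
  qed
  moreover have "(a, b) \<in> R - {(u, v)}" using assms(3,5) by simp
  ultimately show ?thesis by (intro through_ab)
qed

lemma MEG_edge_irredundant:
  assumes meg: "is_MEG E E'" and "finite E" and e: "e \<in> E'"
  shows "e \<notin> (E' - {e})\<^sup>+"
proof
  assume "e \<in> (E' - {e})\<^sup>+"
  then have "E' \<subseteq> (E' - {e})\<^sup>+" by auto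
  then have "E'\<^sup>+ \<subseteq> (E' - {e})\<^sup>+" by (metis trancl_id trancl_mono_subset trans_trancl)
  moreover have "(E' - {e})\<^sup>+ \<subseteq> E'\<^sup>+" by (simp add: trancl_mono_subset)
  ultimately have "(E' - {e})\<^sup>+ = E'\<^sup>+" by (rule equalityI[rotated])
  moreover have "E' - {e} \<subseteq> E" using meg by (auto simp: is_MEG_def)
  ultimately have "card E' \<le> card (E' - {e})" using meg by (auto simp: is_MEG_def)
  moreover have "finite E'" using meg \<open>finite E\<close> by (auto simp: is_MEG_def intro: finite_subset)
  ultimately show False using card_Diff1_less[OF _ e] by fastforce
qed

lemma MEG_no_detour:
  assumes "is_MEG E E'" and "finite E" and "acyclic E'" and "(u, v) \<in> E'"
    and "(u, a) \<in> E'\<^sup>*" and "(a, b) \<in> E'" and "(b, v) \<in> E'\<^sup>*"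
  shows "(a, b) = (u, v)"
  using acyclic_detour_avoids_edge[OF assms(3,5-7)] MEG_edge_irredundant[OF assms(1,2,4)] by blast

lemma MEG_epath_single_edge:
  assumes "is_MEG E E'" and "finite E" and "acyclic E'" and "(u, v) \<in> E'"
    and P: "epath E' u v P"
  shows "set P = {(u, v)}"
proof -
  have "set P \<subseteq> E'" using P by (simp add: epath_def)
  have on_P: "e = (u, v)" if "e \<in> set P" for e
  proof (cases e)
    case (Pair a b)
    with epath_edge_rtrancl[OF P] that \<open>set P \<subseteq> E'\<close> rtrancl_mono
    have "(u, a) \<in> E'\<^sup>*" "(a, b) \<in> E'" "(b, v) \<in> E'\<^sup>*" by blast+
    with Pair show ?thesis using MEG_no_detour[OF assms(1-4)] by blast
  qed
  obtain e where "e \<in> set P" using P unfolding epath_def by (meson list.set_sel(1))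
  with on_P show ?thesis by blast
qed

definition cross_stream_edges :: "('a \<times> 'a) set \<Rightarrow> ('a \<Rightarrow> 's) \<Rightarrow> ('a \<times> 'a) set" where
  "cross_stream_edges E' f = {(u, v) \<in> E'. f u \<noteq> f v}"

lemma safe_sync_MEG_iff:
  assumes "is_MEG E E'" and "finite E" and "acyclic E'"
  shows "safe_sync E' f \<Lambda> \<longleftrightarrow> cross_stream_edges E' f \<subseteq> \<Lambda> \<and> \<Lambda> \<subseteq> E'"
proof -
  have single: "epath E' u v [(u, v)]" if "(u, v) \<in> E'" for u v
    using that by (simp add: epath_def)
  have "(\<exists>P. epath E' u v P \<and> set P \<inter> \<Lambda> \<noteq> {}) \<longleftrightarrow> (u, v) \<in> \<Lambda>" if "(u, v) \<in> E'" for u v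
    using single[OF that] MEG_epath_single_edge[OF assms that] by fastforce
  then show ?thesis by (fastforce simp: safe_sync_def cross_stream_edges_def)
qed

lemma min_sync_MEG:
  assumes "is_MEG E E'" and "finite E" and "acyclic E'"
  shows "min_sync E' f = card (cross_stream_edges E' f)"
proof -
  let ?L = "cross_stream_edges E' f"
  have "finite E'" using assms(1,2) by (auto simp: is_MEG_def intro: finite_subset)
  have "?L \<subseteq> E'" by (auto simp: cross_stream_edges_def)
  have safe: "{\<Lambda>. safe_sync E' f \<Lambda>} = {\<Lambda>. ?L \<subseteq> \<Lambda> \<and> \<Lambda> \<subseteq> E'}"
    using safe_sync_MEG_iff[OF assms] by blast
  show ?thesis
    unfolding min_sync_def safe
  proof (rule Min_eqI)
    show "finite (card ` {\<Lambda>. ?L \<subseteq> \<Lambda> \<and> \<Lambda> \<subseteq> E'})"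
      using \<open>finite E'\<close> by (simp add: finite_subset[of _ "Pow E'"] subset_eq)
    show "card ?L \<in> card ` {\<Lambda>. ?L \<subseteq> \<Lambda> \<and> \<Lambda> \<subseteq> E'}" using \<open>?L \<subseteq> E'\<close> by blast
  next
    fix y assume "y \<in> card ` {\<Lambda>. ?L \<subseteq> \<Lambda> \<and> \<Lambda> \<subseteq> E'}"
    then show "card ?L \<le> y" using \<open>finite E'\<close> by (auto intro: card_mono finite_subset)
  qed
qed

lemma MEG_same_stream_predecessor_unique:
  assumes "is_MEG E E'" and "finite E" and "acyclic E'" and "E' \<subseteq> V \<times> V"
    and "max_logical_concurrency V E' f"
    and "(p, v) \<in> E'" and "(q, v) \<in> E'" and "f p = f v" and "f q = f v"
  shows "p = q"
proof (rule ccontr)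
  assume "p \<noteq> q"
  have no_path: "(x, y) \<notin> E'\<^sup>*" if "(x, v) \<in> E'" "(y, v) \<in> E'" "x \<noteq> y" for x y
  proof
    assume "(x, y) \<in> E'\<^sup>*"
    moreover have "(y, v) \<noteq> (x, v)" using that(3) by simp
    ultimately show False
      using MEG_no_detour[OF assms(1-3) that(1), of y v] that(2) by blast
  qed
  have "p \<in> V" "q \<in> V" using assms(4,6,7) by auto
  with assms(5,8,9) \<open>p \<noteq> q\<close> obtain P where "epath E' p q P \<or> epath E' q p P"
    unfolding max_logical_concurrency_def by metis
  then have "(p, q) \<in> E'\<^sup>* \<or> (q, p) \<in> E'\<^sup>*"
    by (metis epath_def epath_trancl trancl_mono trancl_into_rtrancl)
  then show False
    using no_path[OF assms(6,7) \<open>p \<noteq> q\<close>] no_path[OF assms(7,6)] \<open>p \<noteq> q\<close> by auto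
qed

lemma Qset_eq_same_stream_heads:
  assumes "E' \<subseteq> V \<times> V"
  shows "Qset V E' f = snd ` (E' - cross_stream_edges E' f)"
  using assms by (force simp: Qset_def cross_stream_edges_def)

theorem lemma4:
  fixes V :: "'a set" and E E' :: "('a \<times> 'a) set" and f :: "'a \<Rightarrow> 's"
  assumes "finite_dag V E"
    and "is_MEG E E'"
    and "max_logical_concurrency V E' f"
  shows "int (min_sync E' f) = int (card E') - int (card (Qset V E' f))"
proof -
  have "finite V" and "E \<subseteq> V \<times> V" and "acyclic E"
    using assms(1) by (auto simp: finite_dag_def)
  then have "finite E" by (meson finite_SigmaI finite_subset)
  have "E' \<subseteq> E" using assms(2) by (simp add: is_MEG_def)
  then have "finite E'" "acyclic E'" "E' \<subseteq> V \<times> V"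
    using \<open>finite E\<close> \<open>acyclic E\<close> \<open>E \<subseteq> V \<times> V\<close> by (auto intro: finite_subset acyclic_subset)
  let ?L = "cross_stream_edges E' f"
  have "?L \<subseteq> E'" by (auto simp: cross_stream_edges_def)
  have "inj_on snd (E' - ?L)"
    using MEG_same_stream_predecessor_unique[OF assms(2) \<open>finite E\<close> \<open>acyclic E'\<close> \<open>E' \<subseteq> V \<times> V\<close> assms(3)]
    by (fastforce simp: inj_on_def cross_stream_edges_def)
  then have "card (Qset V E' f) = card (E' - ?L)"
    by (simp add: Qset_eq_same_stream_heads[OF \<open>E' \<subseteq> V \<times> V\<close>] card_image)
  also have "\<dots> = card E' - card ?L"
    using \<open>finite E'\<close> \<open>?L \<subseteq> E'\<close> by (meson card_Diff_subset finite_subset)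
  finally show ?thesis
    using min_sync_MEG[OF assms(2) \<open>finite E\<close> \<open>acyclic E'\<close>] \<open>finite E'\<close> \<open>?L \<subseteq> E'\<close>
    by (simp add: card_mono of_nat_diff)
qed

end
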